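(* Let $n\in\mathbb N$, let $f(z)=\sum_{j\ge0}a_jz^j$ be extremal for $M_n$ with $a_0>0$, and let $P(z)=a_n+2\sum_{j=1}^na_{n-j}z^j$. Then every zero of $P$ lies in the annulus $\{z: 1\le|z|\le r\}$, where \[r=\frac1{a_0}\sqrt{\sum_{j=0}^{n-1}|a_j|^2+\frac{a_n^2}{4}}.\]
   Context: $\mathbb D$ is the open unit disc; $\mathcal B_0=\{f$ holomorphic on $\mathbb D: 0<|f|\le1\}$; $M_n(f)=\mathrm{Re}\,a_n$; $f\in\mathcal B_0$ is extremal for $M_n$ if $M_n(f)\ge M_n(F)$ for all $F\in\mathcal B_0$ (for such $f$, $a_n>0$). *)

theory Defs
  imports "HOL-Analysis.Analysis"
begin

definition B0 :: "(complex \<Rightarrow> complex) set" where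
  "B0 = {f. f holomorphic_on ball 0 1 \<and> (\<forall>z\<in>ball 0 1. 0 < cmod (f z) \<and> cmod (f z) \<le> 1)}"

definition coef :: "(complex \<Rightarrow> complex) \<Rightarrow> nat \<Rightarrow> complex" where
  "coef f j = (deriv ^^ j) f 0 / of_nat (fact j)"

definition M :: "nat \<Rightarrow> (complex \<Rightarrow> complex) \<Rightarrow> real" where
  "M n f = Re (coef f n)"

definition extremal :: "nat \<Rightarrow> (complex \<Rightarrow> complex) \<Rightarrow> bool" where
  "extremal n f \<longleftrightarrow> f \<in> B0 \<and> (\<forall>F\<in>B0. M n f \<ge> M n F)"

end

theory Submission
  imports Defs "HOL-Complex_Analysis.Complex_Analysis"
begin

text \<open>If \<open>f\<close> is extremal and \<open>v\<close> is bounded and holomorphic on the disc with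
  \<open>Re v \<ge> \<delta> > 0\<close>, then \<open>f (1 - s v)\<close> stays in \<open>B\<^sub>0\<close> for small \<open>s > 0\<close>, so extremality
  forces \<open>Re (V f)\<^sub>n \<ge> 0\<close>, where \<open>V\<close> is the Taylor series of \<open>v\<close>. Constant \<open>v\<close> shows
  that \<open>a\<^sub>n\<close> is real. For \<open>|\<zeta>| < 1\<close> the kernel \<open>v z = (1 + \<zeta> z) / (1 - \<zeta> z) - \<epsilon> z\<^sup>n\<close>
  gives \<open>Re P(\<zeta>) \<ge> \<epsilon> a\<^sub>0 > 0\<close>, so \<open>P\<close> has no zeros in the disc. A zero of \<open>P\<close> solves
  \<open>a\<^sub>0 z\<^sup>n = -(a\<^sub>n / 2 + a\<^sub>n\<^sub>-\<^sub>1 z + \<dots> + a\<^sub>1 z\<^sup>n\<^sup>-\<^sup>1)\<close>, and Cauchy--Schwarz against the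
  geometric sum \<open>\<Sum> |z|\<^sup>2\<^sup>j\<close> bounds \<open>|z|\<close> from above.\<close>

lemma coef_eq_fps_nth: "g has_fps_expansion G \<Longrightarrow> coef g n = G $ n"
  by (simp add: coef_def fps_nth_fps_expansion)

lemma
  fixes w :: complex
  assumes "0 < s" "s * (cmod w)\<^sup>2 < Re w"
  shows one_minus_scaled_nonzero: "1 - of_real s * w \<noteq> 0"
    and norm_one_minus_scaled_le_one: "cmod (1 - of_real s * w) \<le> 1"
proof -
  have "0 \<le> s * (cmod w)\<^sup>2"
    using assms(1) by simp
  with assms(2) have "0 < Re w"
    by linarith
  have "s * (Re w)\<^sup>2 \<le> s * (cmod w)\<^sup>2"
    using assms(1) by (intro mult_left_mono) (auto simp: cmod_power2)
  then have "s * Re w * Re w < Re w"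
    using assms(2) by (simp add: power2_eq_square mult.assoc)
  then have "s * Re w < 1"
    using \<open>0 < Re w\<close> by (simp add: mult_less_cancel_right2)
  then have "Re (1 - of_real s * w) \<noteq> 0"
    by simp
  then show "1 - of_real s * w \<noteq> 0"
    by (metis zero_complex.sel(1))
  have "(cmod (1 - of_real s * w))\<^sup>2 = 1 - s * (2 * Re w - s * (cmod w)\<^sup>2)"
    unfolding cmod_power2 by (simp add: power2_eq_square algebra_simps)
  also have "\<dots> \<le> 1"
    using assms \<open>0 < Re w\<close> by simp
  finally show "cmod (1 - of_real s * w) \<le> 1"
    by (simp add: power_le_one_iff)
qed

lemma extremal_variation:
  assumes "extremal n f"
    and "v holomorphic_on ball 0 1" "v has_fps_expansion V"
    and "0 < \<delta>" "\<And>z. z \<in> ball 0 1 \<Longrightarrow> \<delta> \<le> Re (v z) \<and> cmod (v z) \<le> B"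
  shows "0 \<le> Re (\<Sum>i=0..n. V $ i * coef f (n - i))"
proof -
  have "f \<in> B0" and M_le: "\<And>F. F \<in> B0 \<Longrightarrow> M n F \<le> M n f"
    using assms(1) by (auto simp: extremal_def)
  then have f_holo: "f holomorphic_on ball 0 1"
    and f_bounds: "\<And>z. z \<in> ball 0 1 \<Longrightarrow> 0 < cmod (f z) \<and> cmod (f z) \<le> 1"
    by (auto simp: B0_def)
  define s where "s = \<delta> / (B\<^sup>2 + 1)"
  have "0 < s"
    using assms(4) by (simp add: s_def add_nonneg_pos)
  have small: "s * (cmod (v z))\<^sup>2 < Re (v z)" if "z \<in> ball 0 1" for z
  proof -
    have "(cmod (v z))\<^sup>2 \<le> B\<^sup>2"
      using assms(5)[OF that] by (intro power_mono) auto
    then have "s * (cmod (v z))\<^sup>2 < \<delta>"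
      using assms(4) by (simp add: s_def divide_less_eq add_nonneg_pos mult_strict_left_mono)
    with assms(5)[OF that] show ?thesis
      by linarith
  qed
  define F where "F z = f z * (1 - of_real s * v z)" for z
  have "F \<in> B0"
    unfolding B0_def F_def
    using f_holo assms(2) f_bounds \<open>0 < s\<close> small one_minus_scaled_nonzero norm_one_minus_scaled_le_one
    by (auto simp: norm_mult intro!: holomorphic_intros mult_le_one)
  define A where "A = fps_expansion f 0"
  have "f has_fps_expansion A"
    unfolding A_def using f_holo by (intro has_fps_expansion_fps_expansion) auto
  then have "F has_fps_expansion A * (1 - fps_const (of_real s) * V)"
    unfolding F_def using assms(3) by (intro fps_expansion_intros)
  moreover have "A * (1 - fps_const (of_real s) * V) = A - fps_const (of_real s) * (V * A)"
    by (simp add: right_diff_distrib mult.left_commute[of A] mult.commute[of A])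
  ultimately have "M n F = M n f - s * Re ((V * A) $ n)"
    using coef_eq_fps_nth \<open>f has_fps_expansion A\<close> by (simp add: M_def)
  then have "0 \<le> Re ((V * A) $ n)"
    using M_le[OF \<open>F \<in> B0\<close>] \<open>0 < s\<close> by (simp add: zero_le_mult_iff)
  then show ?thesis
    using coef_eq_fps_nth[OF \<open>f has_fps_expansion A\<close>] by (simp add: fps_mult_nth)
qed

lemma extremal_coef_real:
  assumes "extremal n f"
  shows "Im (coef f n) = 0"
proof (rule ccontr)
  assume "Im (coef f n) \<noteq> 0"
  define t where "t = - (\<bar>Re (coef f n)\<bar> + 1) / Im (coef f n)"
  define c where "c = 1 - \<i> * of_real t"
  have "0 \<le> Re (\<Sum>i=0..n. fps_const c $ i * coef f (n - i))"
    using assms by (rule extremal_variation[where \<delta> = 1 and B = "1 + \<bar>t\<bar>"])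
      (auto simp: c_def norm_mult intro!: order_trans[OF norm_triangle_ineq4])
  also have "(\<Sum>i=0..n. fps_const c $ i * coef f (n - i)) = c * coef f n"
    by (simp add: mult_delta_left sum.delta)
  also have "Re (c * coef f n) = Re (coef f n) + t * Im (coef f n)"
    by (simp add: c_def)
  also have "t * Im (coef f n) = - (\<bar>Re (coef f n)\<bar> + 1)"
    using \<open>Im (coef f n) \<noteq> 0\<close> by (simp add: t_def)
  finally show False
    by linarith
qed

lemma has_fps_expansion_geometric:
  fixes \<zeta> :: complex
  shows "(\<lambda>z. 1 / (1 - \<zeta> * z)) has_fps_expansion Abs_fps (\<lambda>m. \<zeta> ^ m)"
proof (rule has_fps_expansionI)
  have "open {u. cmod (\<zeta> * u) < 1}"
    by (intro open_Collect_less continuous_intros)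
  then have "eventually (\<lambda>u. u \<in> {u. cmod (\<zeta> * u) < 1}) (nhds 0)"
    by (rule eventually_nhds_in_open) simp
  then show "eventually (\<lambda>u. (\<lambda>m. Abs_fps (\<lambda>m. \<zeta> ^ m) $ m * u ^ m) sums (1 / (1 - \<zeta> * u))) (nhds 0)"
  proof eventually_elim
    case (elim u)
    then show ?case
      using geometric_sums[of "\<zeta> * u"] by (simp add: power_mult_distrib)
  qed
qed

lemma Re_two_div_one_minus_ge:
  fixes w :: complex
  assumes "cmod w < 1"
  shows "(1 - (cmod w)\<^sup>2) / 4 \<le> Re (2 / (1 - w)) - 1"
proof -
  have "w \<noteq> 1"
    using assms by auto
  have "(cmod (1 - w))\<^sup>2 = 1 - 2 * Re w + (cmod w)\<^sup>2"
    unfolding cmod_power2 by (simp add: power2_eq_square algebra_simps)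
  moreover have "Re (2 / (1 - w)) = 2 * (1 - Re w) / (cmod (1 - w))\<^sup>2"
    by (simp add: Re_divide cmod_power2)
  ultimately have "Re (2 / (1 - w)) - 1 = (1 - (cmod w)\<^sup>2) / (cmod (1 - w))\<^sup>2"
    using \<open>w \<noteq> 1\<close> by (simp add: field_simps)
  also have "(1 - (cmod w)\<^sup>2) / 4 \<le> \<dots>"
  proof (rule divide_left_mono)
    have "cmod (1 - w) \<le> 2"
      using assms norm_triangle_ineq4[of 1 w] by simp
    then show "(cmod (1 - w))\<^sup>2 \<le> 4"
      using power_mono[of "cmod (1 - w)" 2 2] by simp
  qed (use assms \<open>w \<noteq> 1\<close> in \<open>auto simp: power_le_one\<close>)
  finally show ?thesis .
qed

lemma
  fixes w u :: complex and \<rho> \<epsilon> :: real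
  assumes "cmod w \<le> \<rho>" "\<rho> < 1" "cmod u \<le> 1" "0 \<le> \<epsilon>"
  shows kernel_perturbation_Re_ge:
      "\<epsilon> \<le> (1 - \<rho>\<^sup>2) / 8 \<Longrightarrow> \<epsilon> \<le> Re (2 / (1 - w) - 1 - of_real \<epsilon> * u)"
    and kernel_perturbation_norm_le:
      "cmod (2 / (1 - w) - 1 - of_real \<epsilon> * u) \<le> 2 / (1 - \<rho>) + 1 + \<epsilon>"
proof -
  have "cmod w < 1"
    using assms(1,2) by linarith
  have "cmod (of_real \<epsilon> * u) \<le> \<epsilon>"
    using assms(3,4) by (simp add: norm_mult mult_left_le)
  moreover have "Re (of_real \<epsilon> * u) \<le> cmod (of_real \<epsilon> * u)"
    by (rule complex_Re_le_cmod)
  moreover have "(1 - \<rho>\<^sup>2) / 4 \<le> (1 - (cmod w)\<^sup>2) / 4"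
    using assms(1) power_mono[of "cmod w" \<rho> 2] by simp
  ultimately show "\<epsilon> \<le> Re (2 / (1 - w) - 1 - of_real \<epsilon> * u)" if "\<epsilon> \<le> (1 - \<rho>\<^sup>2) / 8"
    using Re_two_div_one_minus_ge[OF \<open>cmod w < 1\<close>] that by simp
  have "1 - \<rho> \<le> cmod (1 - w)"
    using assms(1) norm_triangle_ineq2[of 1 w] by simp
  then have "cmod (2 / (1 - w)) \<le> 2 / (1 - \<rho>)"
    using assms(2) by (simp add: norm_divide frac_le)
  with \<open>cmod (of_real \<epsilon> * u) \<le> \<epsilon>\<close>
  show "cmod (2 / (1 - w) - 1 - of_real \<epsilon> * u) \<le> 2 / (1 - \<rho>) + 1 + \<epsilon>"
    by (smt (verit) norm_triangle_ineq4 norm_one)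
qed

lemma reversed_poly_eq_fps_convolution:
  fixes a :: "nat \<Rightarrow> 'a::comm_ring_1"
  shows "(\<Sum>i=0..n. (fps_const 2 * Abs_fps (\<lambda>m. \<zeta> ^ m) - 1 - fps_const c * fps_X ^ n) $ i * a (n - i))
       = a n + 2 * (\<Sum>j=1..n. a (n - j) * \<zeta> ^ j) - c * a 0"
proof -
  have "(\<Sum>i=0..n. (fps_const 2 * Abs_fps (\<lambda>m. \<zeta> ^ m) - 1 - fps_const c * fps_X ^ n) $ i * a (n - i))
      = (\<Sum>i=0..n. 2 * (a (n - i) * \<zeta> ^ i) - (if i = 0 then a n else 0) - (if i = n then c * a 0 else 0))"
    by (intro sum.cong) (auto simp: algebra_simps)
  also have "\<dots> = 2 * (\<Sum>i=0..n. a (n - i) * \<zeta> ^ i) - a n - c * a 0"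
    by (simp add: sum_subtractf sum_distrib_left sum.delta)
  also have "(\<Sum>i=0..n. a (n - i) * \<zeta> ^ i) = a n + (\<Sum>j=1..n. a (n - j) * \<zeta> ^ j)"
    by (simp add: sum.atLeast_Suc_atMost)
  finally show ?thesis
    by (simp add: algebra_simps)
qed

lemma extremal_reversed_poly_Re_pos:
  assumes "extremal n f" "0 < Re (coef f 0)" "cmod \<zeta> < 1"
  shows "0 < Re (coef f n + 2 * (\<Sum>j=1..n. coef f (n - j) * \<zeta> ^ j))"
proof -
  define \<epsilon> where "\<epsilon> = (1 - (cmod \<zeta>)\<^sup>2) / 8"
  have "0 < \<epsilon>"
    using assms(3) by (simp add: \<epsilon>_def abs_square_less_1)
  have \<epsilon>_le: "\<epsilon> \<le> (1 - (cmod \<zeta>)\<^sup>2) / 8"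
    by (simp add: \<epsilon>_def)
  have Re_diff_of_real_mult: "Re (p - of_real \<epsilon> * q) = Re p - \<epsilon> * Re q" for p q
    by simp
  define v where "v z = 2 * (1 / (1 - \<zeta> * z)) - 1 - of_real \<epsilon> * z ^ n" for z
  define V where "V = fps_const 2 * Abs_fps (\<lambda>m. \<zeta> ^ m) - 1 - fps_const (of_real \<epsilon>) * fps_X ^ n"
  have "v has_fps_expansion V"
    unfolding v_def V_def by (intro fps_expansion_intros has_fps_expansion_geometric)
  have zeta_z: "cmod (\<zeta> * z) \<le> cmod \<zeta>" if "z \<in> ball 0 1" for z
    using that by (simp add: norm_mult mult_left_le)
  have "1 - \<zeta> * z \<noteq> 0" if "z \<in> ball 0 1" for z
    using zeta_z[OF that] assms(3) by auto
  then have "v holomorphic_on ball 0 1"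
    unfolding v_def by (intro holomorphic_intros) auto
  moreover have "\<epsilon> \<le> Re (v z) \<and> cmod (v z) \<le> 2 / (1 - cmod \<zeta>) + 1 + \<epsilon>" if "z \<in> ball 0 1" for z
  proof -
    have "cmod (z ^ n) \<le> 1"
      using that by (simp add: norm_power power_le_one)
    from kernel_perturbation_Re_ge[OF zeta_z[OF that] assms(3) this _ \<epsilon>_le]
      kernel_perturbation_norm_le[OF zeta_z[OF that] assms(3) this]
    show ?thesis
      using \<open>0 < \<epsilon>\<close> by (simp add: v_def)
  qed
  ultimately have "0 \<le> Re (\<Sum>i=0..n. V $ i * coef f (n - i))"
    using extremal_variation[OF assms(1) _ \<open>v has_fps_expansion V\<close> \<open>0 < \<epsilon>\<close>] by blast
  also have "(\<Sum>i=0..n. V $ i * coef f (n - i))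
      = coef f n + 2 * (\<Sum>j=1..n. coef f (n - j) * \<zeta> ^ j) - of_real \<epsilon> * coef f 0"
    unfolding V_def by (rule reversed_poly_eq_fps_convolution)
  finally have "0 \<le> Re (coef f n + 2 * (\<Sum>j=1..n. coef f (n - j) * \<zeta> ^ j)) - \<epsilon> * Re (coef f 0)"
    unfolding Re_diff_of_real_mult .
  moreover have "0 < \<epsilon> * Re (coef f 0)"
    using assms(2) \<open>0 < \<epsilon>\<close> by simp
  ultimately show ?thesis
    by linarith
qed

lemma sum_squares_ge_of_power_le_lower_powers:
  fixes x a :: real and c :: "nat \<Rightarrow> real"
  assumes "1 < x" "0 \<le> a" "a * x ^ n \<le> (\<Sum>j<n. c j * x ^ j)"
  shows "a\<^sup>2 * (x\<^sup>2 - 1) \<le> (\<Sum>j<n. (c j)\<^sup>2)"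
proof -
  define T where "T = (\<Sum>j<n. (c j)\<^sup>2)"
  define G where "G = (\<Sum>j<n. (x\<^sup>2) ^ j)"
  have "(a * x ^ n)\<^sup>2 \<le> (\<Sum>j<n. c j * x ^ j)\<^sup>2"
    using assms by (intro power_mono) auto
  also have "\<dots> \<le> T * G"
    using Cauchy_Schwarz_ineq_sum[of c "\<lambda>j. x ^ j" "{..<n}"]
    by (simp add: T_def G_def power_mult[symmetric] mult.commute)
  finally have "a\<^sup>2 * (x\<^sup>2) ^ n \<le> T * G"
    by (simp add: power_mult_distrib power_mult[symmetric] mult.commute)
  then have "a\<^sup>2 * (x\<^sup>2) ^ n * (x\<^sup>2 - 1) \<le> T * (G * (x\<^sup>2 - 1))"
    using \<open>1 < x\<close> by (simp add: mult_right_mono mult.assoc)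
  also have "G * (x\<^sup>2 - 1) = (x\<^sup>2) ^ n - 1"
    by (simp add: G_def power_diff_1_eq mult.commute)
  also have "T * ((x\<^sup>2) ^ n - 1) \<le> T * (x\<^sup>2) ^ n"
    by (simp add: T_def algebra_simps sum_nonneg)
  finally have "(x\<^sup>2) ^ n * (a\<^sup>2 * (x\<^sup>2 - 1)) \<le> (x\<^sup>2) ^ n * T"
    by (simp add: algebra_simps)
  then show ?thesis
    using \<open>1 < x\<close> by (simp add: T_def)
qed

lemma root_norm_le_sqrt_sum_squares:
  fixes c z :: complex and b :: "nat \<Rightarrow> complex"
  assumes "c \<noteq> 0" "c * z ^ n = (\<Sum>j<n. b j * z ^ j)"
  shows "cmod z \<le> sqrt ((cmod c)\<^sup>2 + (\<Sum>j<n. (cmod (b j))\<^sup>2)) / cmod c"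
proof -
  define S where "S = (cmod c)\<^sup>2 + (\<Sum>j<n. (cmod (b j))\<^sup>2)"
  have "(cmod z)\<^sup>2 * (cmod c)\<^sup>2 \<le> S"
  proof (cases "cmod z \<le> 1")
    case True
    then have "(cmod z)\<^sup>2 * (cmod c)\<^sup>2 \<le> (cmod c)\<^sup>2"
      by (simp add: mult_left_le_one_le power_le_one)
    then show ?thesis
      by (simp add: S_def sum_nonneg add_increasing2)
  next
    case False
    have "cmod c * cmod z ^ n = cmod (\<Sum>j<n. b j * z ^ j)"
      using assms(2) by (metis norm_mult norm_power)
    also have "\<dots> \<le> (\<Sum>j<n. cmod (b j) * cmod z ^ j)"
      by (rule order_trans[OF norm_sum]) (simp add: norm_mult norm_power)
    finally have "(cmod c)\<^sup>2 * ((cmod z)\<^sup>2 - 1) \<le> (\<Sum>j<n. (cmod (b j))\<^sup>2)"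
      using False by (intro sum_squares_ge_of_power_le_lower_powers) auto
    then show ?thesis
      by (simp add: S_def algebra_simps)
  qed
  then have "cmod z * cmod c \<le> sqrt S"
    by (simp add: real_le_rsqrt power_mult_distrib)
  then have "cmod z \<le> sqrt S / cmod c"
    using assms(1) by (simp add: le_divide_eq)
  then show ?thesis
    by (simp add: S_def)
qed

lemma reversed_poly_root_norm_le:
  fixes a :: "nat \<Rightarrow> complex" and z :: complex
  assumes "a 0 \<noteq> 0" "a n + 2 * (\<Sum>j=1..n. a (n - j) * z ^ j) = 0"
  shows "cmod z \<le> sqrt ((\<Sum>j<n. (cmod (a j))\<^sup>2) + (cmod (a n))\<^sup>2 / 4) / cmod (a 0)"
proof -
  have "0 < n"
    using assms by (cases n) auto
  have split_0: "sum g {..<n} = g 0 + sum g {1..<n}" for g :: "nat \<Rightarrow> 'b::comm_monoid_add"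
    using \<open>0 < n\<close> by (simp add: atLeast0LessThan[symmetric] sum.atLeast_Suc_lessThan)
  have "{1..n} = insert n {1..<n}"
    using \<open>0 < n\<close> by auto
  then have split_n: "sum g {1..n} = sum g {1..<n} + g n" for g :: "nat \<Rightarrow> 'b::comm_monoid_add"
    by (simp add: add.commute)
  have reflect: "sum (\<lambda>j. g (n - j)) {1..<n} = sum g {1..<n}" for g :: "nat \<Rightarrow> 'b::comm_monoid_add"
    by (subst sum.atLeastLessThan_rev) simp
  define b where "b j = - (if j = 0 then a n / 2 else a (n - j))" for j
  have "a 0 * z ^ n = - (a n / 2 + (\<Sum>j=1..<n. a (n - j) * z ^ j))"
    using eq_neg_iff_add_eq_0[THEN iffD2, OF assms(2)[unfolded split_n]] by (simp add: field_simps)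
  also have "\<dots> = (\<Sum>j<n. b j * z ^ j)"
    by (simp add: split_0 b_def sum_negf)
  finally have "a 0 * z ^ n = (\<Sum>j<n. b j * z ^ j)" .
  then have "cmod z \<le> sqrt ((cmod (a 0))\<^sup>2 + (\<Sum>j<n. (cmod (b j))\<^sup>2)) / cmod (a 0)"
    by (rule root_norm_le_sqrt_sum_squares[OF assms(1)])
  also have "(cmod (a 0))\<^sup>2 + (\<Sum>j<n. (cmod (b j))\<^sup>2) = (\<Sum>j<n. (cmod (a j))\<^sup>2) + (cmod (a n))\<^sup>2 / 4"
    using reflect[of "\<lambda>j. (cmod (a j))\<^sup>2"]
    by (simp add: split_0 b_def norm_divide power_divide)
  finally show ?thesis .
qed

theorem lemma10:
  fixes n :: nat and f :: "complex \<Rightarrow> complex" and z :: complex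
  assumes "extremal n f"
    and "Im (coef f 0) = 0" and "Re (coef f 0) > 0"
    and "coef f n + 2 * (\<Sum>j=1..n. coef f (n - j) * z ^ j) = 0"
  shows "1 \<le> cmod z \<and>
         cmod z \<le> (1 / Re (coef f 0)) *
            sqrt ((\<Sum>j<n. (cmod (coef f j))\<^sup>2) + (Re (coef f n))\<^sup>2 / 4)"
proof
  show "1 \<le> cmod z"
    using extremal_reversed_poly_Re_pos[OF assms(1,3), of z] assms(4) by fastforce
  have "cmod (coef f 0) = Re (coef f 0)"
    using assms(2,3) by (simp add: cmod_eq_Re)
  moreover have "(cmod (coef f n))\<^sup>2 = (Re (coef f n))\<^sup>2"
    using extremal_coef_real[OF assms(1)] by (simp add: cmod_power2)
  moreover have "coef f 0 \<noteq> 0"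
    using assms(3) by auto
  ultimately show "cmod z \<le> (1 / Re (coef f 0)) *
      sqrt ((\<Sum>j<n. (cmod (coef f j))\<^sup>2) + (Re (coef f n))\<^sup>2 / 4)"
    using reversed_poly_root_norm_le[OF _ assms(4)] by simp
qed

end
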